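(* Let $\lambda_1,\lambda_2,\lambda_3\in\mathbb{R}$ with $0<\lambda_2<(2+2\sqrt2)\lambda_1$ and $\lambda_3>0$. Then $(z_1,z_2)=(0,0)$ is the only real solution of the system $$\lambda_1z_1+\lambda_3(z_1-z_2)+\lambda_2\frac{z_1^2(z_1-1)}{1+z_1^2}=0,\qquad \lambda_1z_2+\lambda_3(z_2-z_1)+\lambda_2\frac{z_2^2(z_2-1)}{1+z_2^2}=0.$$ *)

theory Defs
  imports Complex_Main
begin

end

theory Submission
  imports Defs
begin

text \<open>Multiplying the first equation by \<open>z\<^sub>1\<close>, the second by \<open>z\<^sub>2\<close> and adding gives
  \<open>z\<^sub>1 f(z\<^sub>1) + z\<^sub>2 f(z\<^sub>2) + \<lambda>\<^sub>3 (z\<^sub>1 - z\<^sub>2)\<^sup>2 = 0\<close>, where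
  \<open>f(z) = \<lambda>\<^sub>1 z + \<lambda>\<^sub>2 z\<^sup>2 (z - 1) / (1 + z\<^sup>2)\<close> is the on-site term. Now
  \<open>z f(z) = z\<^sup>2 ((\<lambda>\<^sub>1 + \<lambda>\<^sub>2) z\<^sup>2 - \<lambda>\<^sub>2 z + \<lambda>\<^sub>1) / (1 + z\<^sup>2)\<close>, and the quadratic factor
  has discriminant \<open>\<lambda>\<^sub>2\<^sup>2 - 4\<lambda>\<^sub>1\<lambda>\<^sub>2 - 4\<lambda>\<^sub>1\<^sup>2\<close>, which is negative exactly when
  \<open>(2 - 2\<surd>2)\<lambda>\<^sub>1 < \<lambda>\<^sub>2 < (2 + 2\<surd>2)\<lambda>\<^sub>1\<close>. Hence \<open>z f(z) > 0\<close> for \<open>z \<noteq> 0\<close>, and all three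
  summands must vanish.\<close>

lemma quadratic_pos_of_discrim_neg:
  fixes a b c x :: real
  assumes "0 < a" and "b\<^sup>2 < 4 * a * c"
  shows "0 < a * x\<^sup>2 + b * x + c"
proof -
  have "4 * a * (a * x\<^sup>2 + b * x + c) = (2 * a * x + b)\<^sup>2 + (4 * a * c - b\<^sup>2)"
    by (simp add: power2_eq_square algebra_simps)
  also have "\<dots> > 0"
    using assms(2) by (simp add: add_nonneg_pos)
  finally show ?thesis
    using assms(1) by (simp add: zero_less_mult_iff)
qed

lemma pos_of_ratio_bounds:
  fixes l1 l2 :: real
  assumes "0 < l2" and "l2 < (2 + 2 * sqrt 2) * l1"
  shows "0 < l1"
proof (rule ccontr)
  assume "\<not> 0 < l1"
  then have "(2 + 2 * sqrt 2) * l1 \<le> 0"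
    by (simp add: mult_nonneg_nonpos)
  then show False
    using assms by simp
qed

lemma discrim_neg_of_ratio_bounds:
  fixes l1 l2 :: real
  assumes "0 < l2" and "l2 < (2 + 2 * sqrt 2) * l1"
  shows "l2\<^sup>2 < 4 * l1 * (l1 + l2)"
proof -
  have "1 < sqrt 2"
    by simp
  have "(2 - 2 * sqrt 2) * l1 < 0"
    using \<open>1 < sqrt 2\<close> pos_of_ratio_bounds[OF assms] by (simp add: mult_neg_pos)
  then have "(l2 - (2 + 2 * sqrt 2) * l1) * (l2 - (2 - 2 * sqrt 2) * l1) < 0"
    using assms by (intro mult_neg_pos) simp_all
  moreover have "(l2 - (2 + 2 * sqrt 2) * l1) * (l2 - (2 - 2 * sqrt 2) * l1)
      = l2\<^sup>2 - 4 * l1 * (l1 + l2)"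
    by (simp add: power2_eq_square algebra_simps)
  ultimately show ?thesis
    by simp
qed

definition site_force :: "real \<Rightarrow> real \<Rightarrow> real \<Rightarrow> real" where
  "site_force l1 l2 z = l1 * z + l2 * (z\<^sup>2 * (z - 1) / (1 + z\<^sup>2))"

lemma mult_site_force_eq:
  "z * site_force l1 l2 z = z\<^sup>2 * ((l1 + l2) * z\<^sup>2 - l2 * z + l1) / (1 + z\<^sup>2)"
proof -
  have "1 + z\<^sup>2 \<noteq> 0"
    by (smt (verit) zero_le_power2)
  then show ?thesis
    unfolding site_force_def by (simp add: field_simps power2_eq_square)
qed

lemma mult_site_force_pos:
  fixes l1 l2 z :: real
  assumes "0 < l2" and "l2 < (2 + 2 * sqrt 2) * l1" and "z \<noteq> 0"
  shows "0 < z * site_force l1 l2 z"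
proof -
  have "0 < (l1 + l2) * z\<^sup>2 + (- l2) * z + l1"
    using assms(1) pos_of_ratio_bounds[OF assms(1,2)] discrim_neg_of_ratio_bounds[OF assms(1,2)]
    by (intro quadratic_pos_of_discrim_neg) (auto simp: algebra_simps)
  moreover have "0 < 1 + z\<^sup>2"
    by (smt (verit) zero_le_power2)
  ultimately show ?thesis
    using assms(3) unfolding mult_site_force_eq by simp
qed

lemma mult_site_force_nonneg:
  fixes l1 l2 z :: real
  assumes "0 < l2" and "l2 < (2 + 2 * sqrt 2) * l1"
  shows "0 \<le> z * site_force l1 l2 z"
  using mult_site_force_pos[OF assms] by (cases "z = 0") (auto simp: less_imp_le)

theorem lemmaF3:
  fixes l1 l2 l3 z1 z2 :: real
  assumes "0 < l2" and "l2 < (2 + 2 * sqrt 2) * l1" and "l3 > 0"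
  shows "(l1 * z1 + l3 * (z1 - z2) + l2 * (z1^2 * (z1 - 1) / (1 + z1^2)) = 0 \<and>
          l1 * z2 + l3 * (z2 - z1) + l2 * (z2^2 * (z2 - 1) / (1 + z2^2)) = 0)
         \<longleftrightarrow> (z1 = 0 \<and> z2 = 0)"
proof
  let ?F = "site_force l1 l2"
  assume "l1 * z1 + l3 * (z1 - z2) + l2 * (z1^2 * (z1 - 1) / (1 + z1^2)) = 0 \<and>
          l1 * z2 + l3 * (z2 - z1) + l2 * (z2^2 * (z2 - 1) / (1 + z2^2)) = 0"
  then have "?F z1 + l3 * (z1 - z2) = 0" and "?F z2 + l3 * (z2 - z1) = 0"
    by (simp_all add: site_force_def algebra_simps)
  moreover have "z1 * (?F z1 + l3 * (z1 - z2)) + z2 * (?F z2 + l3 * (z2 - z1))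
      = z1 * ?F z1 + z2 * ?F z2 + l3 * (z1 - z2)\<^sup>2"
    by (simp add: power2_eq_square algebra_simps)
  ultimately have energy: "z1 * ?F z1 + z2 * ?F z2 + l3 * (z1 - z2)\<^sup>2 = 0"
    by simp
  have "0 \<le> z1 * ?F z1" and "0 \<le> z2 * ?F z2" and "0 \<le> l3 * (z1 - z2)\<^sup>2"
    using assms by (simp_all add: mult_site_force_nonneg)
  then have "z1 * ?F z1 = 0" and "z2 * ?F z2 = 0"
    using energy by linarith+
  then show "z1 = 0 \<and> z2 = 0"
    using mult_site_force_pos[OF assms(1,2)] by (metis less_irrefl)
qed (simp add: site_force_def)

end
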